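(* 1) For each odd $n\ge3$ there exists a binary Euclidean almost self-dual $[2n,n,\min\{4,n\}]_2$ code; in particular, for each odd $n\ge5$ there exists a binary Euclidean almost self-dual $[2n,n,4]_2$ code. 2) For each even $n\ge2$ there exists a binary Euclidean self-dual $[2n,n,\min\{4,n\}]_2$ code; in particular, for each even $n\ge4$ there exists a binary Euclidean self-dual $[2n,n,4]_2$ code.
   Context: For a binary linear $[n,k,d]_2$ code $\mathcal{C}$, $\mathrm{Hull}_E(\mathcal{C})=\mathcal{C}\cap\mathcal{C}^{\perp_E}$ with $\perp_E$ the dual under $\sum_ix_iy_i$. $\mathcal{C}$ is Euclidean self-dual if $\mathcal{C}=\mathcal{C}^{\perp_E}$. $\mathcal{C}$ is almost Euclidean self-orthogonal if $\dim(\mathrm{Hull}_E(\mathcal{C}))=k-1$, and almost Euclidean self-dual if it is almost Euclidean self-orthogonal and $n=2k$. *)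

theory Defs
  imports Main HOL.Vector_Spaces "HOL-Library.Z2" "HOL-Library.Function_Algebras"
begin

text \<open>Binary words of length N are functions nat => bit vanishing outside {0..<N};
  they form a vector space over GF(2) = bit with pointwise operations.\<close>

definition bscale :: "bit \<Rightarrow> (nat \<Rightarrow> bit) \<Rightarrow> (nat \<Rightarrow> bit)" where
  "bscale c v = (\<lambda>i. c * v i)"

global_interpretation bvs: vector_space bscale
  by unfold_locales (auto simp: bscale_def fun_eq_iff algebra_simps)

definition words :: "nat \<Rightarrow> (nat \<Rightarrow> bit) set" where
  "words N = {v. \<forall>i\<ge>N. v i = 0}"

definition wt :: "(nat \<Rightarrow> bit) \<Rightarrow> nat" where
  "wt v = card {i. v i \<noteq> 0}"

definition einner :: "nat \<Rightarrow> (nat \<Rightarrow> bit) \<Rightarrow> (nat \<Rightarrow> bit) \<Rightarrow> bit" where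
  "einner N x y = (\<Sum>i<N. x i * y i)"

definition edual :: "nat \<Rightarrow> (nat \<Rightarrow> bit) set \<Rightarrow> (nat \<Rightarrow> bit) set" where
  "edual N C = {y \<in> words N. \<forall>x\<in>C. einner N x y = 0}"

definition hullE :: "nat \<Rightarrow> (nat \<Rightarrow> bit) set \<Rightarrow> (nat \<Rightarrow> bit) set" where
  "hullE N C = C \<inter> edual N C"

definition min_dist :: "(nat \<Rightarrow> bit) set \<Rightarrow> nat" where
  "min_dist C = Min {wt c | c. c \<in> C \<and> c \<noteq> 0}"

definition linear_code :: "nat \<Rightarrow> nat \<Rightarrow> nat \<Rightarrow> (nat \<Rightarrow> bit) set \<Rightarrow> bool" where
  "linear_code N k d C \<longleftrightarrow> C \<subseteq> words N \<and> bvs.subspace C \<and> bvs.dim C = k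
     \<and> (\<exists>c\<in>C. c \<noteq> 0) \<and> min_dist C = d"

definition euclid_self_dual :: "nat \<Rightarrow> (nat \<Rightarrow> bit) set \<Rightarrow> bool" where
  "euclid_self_dual N C \<longleftrightarrow> C = edual N C"

definition almost_euclid_self_orth :: "nat \<Rightarrow> (nat \<Rightarrow> bit) set \<Rightarrow> bool" where
  "almost_euclid_self_orth N C \<longleftrightarrow> bvs.dim (hullE N C) = bvs.dim C - 1"

definition almost_euclid_self_dual :: "nat \<Rightarrow> (nat \<Rightarrow> bit) set \<Rightarrow> bool" where
  "almost_euclid_self_dual N C \<longleftrightarrow> almost_euclid_self_orth N C \<and> N = 2 * bvs.dim C"

end

theory Submission
  imports Defs
begin

text \<open>
  Split a word of length \<open>2n\<close> into the \<open>n\<close> pairs \<open>(v\<^sub>2\<^sub>k, v\<^sub>2\<^sub>k\<^sub>+\<^sub>1)\<close> and let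
  \<open>C\<^sub>n = pair_code n\<close> consist of the words all of whose pairs have the same sum \<open>a(v)\<close> and
  whose even coordinates sum to \<open>0\<close>. Expanding pair by pair, the even-coordinate
  sums cancel and \<open>\<langle>x, y\<rangle> = n a(x) a(y)\<close>. Hence \<open>C\<^sub>n\<close> is self-orthogonal for even \<open>n\<close>,
  while for odd \<open>n\<close> its hull is the subcode \<open>a = 0\<close>, which is the even-weight code of
  length \<open>n\<close> with every bit doubled. That subcode has dimension \<open>n - 1\<close> and the word
  supported on the odd coordinates completes it to \<open>C\<^sub>n\<close>, so \<open>dim C\<^sub>n = n\<close>.
  A word with \<open>a = 1\<close> has a \<open>1\<close> in every pair, and a nonzero word with \<open>a = 0\<close> has an
  even, positive number of pairs \<open>11\<close>; so the minimum weight is \<open>min 4 n\<close>.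
  Finally, for even \<open>n\<close> orthogonality to the words supported on two pairs and to the
  odd-coordinate word forces a dual word into \<open>C\<^sub>n\<close>.
\<close>

declare add_bit_eq_xor [simp del] mult_bit_eq_and [simp del]

lemma bit_add_eq_0_iff: "x + y = (0::bit) \<longleftrightarrow> x = y"
  by (cases x; cases y) simp_all

lemma bit_add_left_eq_iff: "y + x = z \<longleftrightarrow> x = y + (z::bit)"
  by (cases x; cases y; cases z) simp_all

lemma of_nat_bit: "(of_nat n :: bit) = (if even n then 0 else 1)"
  by (induction n) auto

lemma sum_bit_eq_of_nat_card:
  "finite A \<Longrightarrow> (\<Sum>a\<in>A. f a :: bit) = of_nat (card {a\<in>A. f a = 1})"
proof (induction A rule: finite_induct)
  case (insert a A)
  then have "{x \<in> insert a A. f x = 1}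
      = (if f a = 1 then insert a {x \<in> A. f x = 1} else {x \<in> A. f x = 1})"
    by auto
  with insert show ?case by (cases "f a") auto
qed simp

lemma sum_fun_apply: "sum f A x = (\<Sum>a\<in>A. f a x)"
  by (induction A rule: infinite_finite_induct) auto

lemma sum_lessThan_double:
  fixes f :: "nat \<Rightarrow> 'a::comm_monoid_add"
  shows "(\<Sum>i<2*n. f i) = (\<Sum>k<n. f (2*k) + f (2*k+1))"
  by (induction n) (simp_all add: ac_simps)

lemma bscale_apply [simp]: "bscale c v i = c * v i"
  by (simp add: bscale_def)

lemma support_subset_words:
  assumes "c \<in> words N"
  shows "{i. c i \<noteq> 0} \<subseteq> {..<N}"
proof
  fix i assume "i \<in> {i. c i \<noteq> 0}"
  then show "i \<in> {..<N}"
    using assms not_less unfolding words_def by blast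
qed

lemma wt_zero [simp]: "wt 0 = 0"
  by (simp add: wt_def)

lemma wt_le_length: "c \<in> words N \<Longrightarrow> wt c \<le> N"
  unfolding wt_def using card_mono[OF finite_lessThan support_subset_words] by simp

lemma card_le_wt:
  assumes "c \<in> words N" and "S \<subseteq> {i. c i \<noteq> 0}"
  shows "card S \<le> wt c"
  unfolding wt_def
  by (rule card_mono[OF finite_subset[OF support_subset_words[OF assms(1)] finite_lessThan] assms(2)])

lemma bvs_independent_pivots:
  assumes fin: "finite B"
    and pivot: "\<And>v. v \<in> B \<Longrightarrow> \<exists>p. v p = 1 \<and> (\<forall>w\<in>B. w \<noteq> v \<longrightarrow> w p = 0)"
  shows "bvs.independent B"
proof
  assume "bvs.dependent B"
  then obtain u v where v: "v \<in> B" "u v \<noteq> 0" and s: "(\<Sum>w\<in>B. bscale (u w) w) = 0"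
    using bvs.dependent_finite[OF fin] by auto
  obtain p where p: "v p = 1" "\<forall>w\<in>B. w \<noteq> v \<longrightarrow> w p = 0"
    using pivot[OF v(1)] by auto
  have "0 = (\<Sum>w\<in>B. bscale (u w) w) p"
    using s by simp
  also have "\<dots> = (\<Sum>w\<in>B. u w * w p)"
    by (simp add: sum_fun_apply)
  also have "\<dots> = u v * v p + (\<Sum>w\<in>B - {v}. u w * w p)"
    using fin v(1) by (simp add: sum.remove)
  also have "(\<Sum>w\<in>B - {v}. u w * w p) = 0"
    using p(2) by (intro sum.neutral) auto
  finally show False using p(1) v(2) by simp
qed

definition pair_code :: "nat \<Rightarrow> (nat \<Rightarrow> bit) set" where
  "pair_code n = {v \<in> words (2*n).
     (\<forall>k<n. v (2*k) + v (2*k+1) = v 0 + v 1) \<and> (\<Sum>k<n. v (2*k)) = 0}"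

definition doubled_even_code :: "nat \<Rightarrow> (nat \<Rightarrow> bit) set" where
  "doubled_even_code n = {v \<in> pair_code n. v 0 + v 1 = 0}"

definition pair_indicator :: "nat set \<Rightarrow> nat \<Rightarrow> bit" where
  "pair_indicator K = (\<lambda>j. if j div 2 \<in> K then 1 else 0)"

definition odd_indicator :: "nat \<Rightarrow> nat \<Rightarrow> bit" where
  "odd_indicator n = (\<lambda>j. if odd j \<and> j < 2*n then 1 else 0)"

lemma subspace_pair_code: "bvs.subspace (pair_code n)"
  unfolding bvs.subspace_def pair_code_def words_def
  by (simp add: sum.distrib algebra_simps flip: sum_distrib_left distrib_left)

lemma subspace_doubled_even_code: "bvs.subspace (doubled_even_code n)"
proof -
  have "bvs.subspace {v::nat \<Rightarrow> bit. v 0 + v 1 = 0}"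
    unfolding bvs.subspace_def by (simp add: algebra_simps flip: distrib_left)
  moreover have "doubled_even_code n = pair_code n \<inter> {v. v 0 + v 1 = 0}"
    by (auto simp: doubled_even_code_def)
  ultimately show ?thesis
    using subspace_pair_code bvs.subspace_inter by simp
qed

lemma pair_code_odd_coordinate:
  "v \<in> pair_code n \<Longrightarrow> k < n \<Longrightarrow> v (2*k+1) = v (2*k) + (v 0 + v 1)"
  by (simp add: pair_code_def flip: bit_add_left_eq_iff)

lemma doubled_even_code_coordinate:
  assumes "v \<in> doubled_even_code n"
  shows "v j = v (2 * (j div 2))"
proof (cases "j < 2*n")
  case True
  then have "j div 2 < n" by linarith
  moreover have "j = 2 * (j div 2) \<or> j = 2 * (j div 2) + 1" by linarith
  ultimately show ?thesis
    using assms pair_code_odd_coordinate by (fastforce simp: doubled_even_code_def)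
next
  case False
  then show ?thesis using assms by (simp add: doubled_even_code_def pair_code_def words_def)
qed

lemma doubled_even_code_eq_pair_indicator:
  assumes "v \<in> doubled_even_code n"
  shows "v = pair_indicator {k. k < n \<and> v (2*k) = 1}"
proof
  fix j
  have "j div 2 < n" if "v (2 * (j div 2)) = 1"
  proof (rule ccontr)
    assume "\<not> j div 2 < n"
    then have "v (2 * (j div 2)) = 0"
      using assms by (simp add: doubled_even_code_def pair_code_def words_def)
    with that show False by simp
  qed
  then show "v j = pair_indicator {k. k < n \<and> v (2*k) = 1} j"
    using doubled_even_code_coordinate[OF assms, of j]
    by (cases "v (2 * (j div 2))") (auto simp: pair_indicator_def)
qed

lemma pair_indicator_in_doubled_even_code:
  assumes "K \<subseteq> {..<n}" and "even (card K)"
  shows "pair_indicator K \<in> doubled_even_code n"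
proof -
  have "{k \<in> {..<n}. pair_indicator K (2*k) = 1} = K"
    using assms(1) by (auto simp: pair_indicator_def)
  then have "(\<Sum>k<n. pair_indicator K (2*k)) = 0"
    using assms(2) by (simp add: sum_bit_eq_of_nat_card of_nat_bit)
  moreover have "pair_indicator K \<in> words (2*n)"
    using assms(1) by (auto simp: words_def pair_indicator_def)
  ultimately show ?thesis
    by (simp add: doubled_even_code_def pair_code_def pair_indicator_def)
qed

lemma even_card_doubled_even_code:
  assumes "v \<in> doubled_even_code n"
  shows "even (card {k. k < n \<and> v (2*k) = 1})"
proof -
  have "(\<Sum>k<n. v (2*k)) = 0"
    using assms by (simp add: doubled_even_code_def pair_code_def)
  then show ?thesis by (simp add: sum_bit_eq_of_nat_card of_nat_bit split: if_splits)
qed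

lemma odd_indicator_in_pair_code: "n \<ge> 1 \<Longrightarrow> odd_indicator n \<in> pair_code n"
  by (auto simp: pair_code_def odd_indicator_def words_def)

lemma odd_indicator_nonzero: "n \<ge> 1 \<Longrightarrow> odd_indicator n \<noteq> 0"
  by (auto simp: odd_indicator_def fun_eq_iff intro!: exI[of _ 1])

lemma odd_indicator_notin_doubled_even_code: "n \<ge> 1 \<Longrightarrow> odd_indicator n \<notin> doubled_even_code n"
  by (simp add: doubled_even_code_def odd_indicator_def)

lemma einner_pair_code:
  assumes x: "x \<in> pair_code n" and y: "y \<in> pair_code n"
  shows "einner (2*n) x y = of_nat n * (x 0 + x 1) * (y 0 + y 1)"
proof -
  let ?a = "x 0 + x 1" and ?c = "y 0 + y 1"
  have pair: "x (2*k) * y (2*k) + x (2*k+1) * y (2*k+1) = x (2*k) * ?c + ?a * y (2*k) + ?a * ?c"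
    if "k < n" for k
    unfolding pair_code_odd_coordinate[OF x that] pair_code_odd_coordinate[OF y that]
    by (cases "x (2*k)"; cases "y (2*k)"; cases ?a; cases ?c) simp_all
  have "einner (2*n) x y = (\<Sum>k<n. x (2*k) * ?c + ?a * y (2*k) + ?a * ?c)"
    unfolding einner_def sum_lessThan_double using pair by simp
  also have "\<dots> = (\<Sum>k<n. x (2*k)) * ?c + ?a * (\<Sum>k<n. y (2*k)) + of_nat n * (?a * ?c)"
    by (simp add: sum.distrib sum_distrib_left sum_distrib_right)
  also have "\<dots> = of_nat n * ?a * ?c"
    using x y by (simp add: pair_code_def mult.assoc)
  finally show ?thesis .
qed

lemma einner_pair_indicator:
  assumes "K \<subseteq> {..<n}"
  shows "einner (2*n) (pair_indicator K) y = (\<Sum>k\<in>K. y (2*k) + y (2*k+1))"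
  unfolding einner_def sum_lessThan_double
  using assms by (intro sum.mono_neutral_cong_right) (auto simp: pair_indicator_def)

lemma einner_odd_indicator: "einner (2*n) (odd_indicator n) y = (\<Sum>k<n. y (2*k+1))"
  unfolding einner_def sum_lessThan_double by (simp add: odd_indicator_def)

definition doubled_even_basis :: "nat \<Rightarrow> (nat \<Rightarrow> bit) set" where
  "doubled_even_basis n = (\<lambda>i. pair_indicator {0, i}) ` {1..<n}"

lemma doubled_even_basis_subset: "doubled_even_basis n \<subseteq> doubled_even_code n"
  unfolding doubled_even_basis_def by (auto intro: pair_indicator_in_doubled_even_code)

lemma pair_indicator_pivot:
  "i \<in> {1..<n} \<Longrightarrow> i' \<in> {1..<n} \<Longrightarrow> pair_indicator {0, i'} (2*i) = (if i' = i then 1 else 0)"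
  by (auto simp: pair_indicator_def)

lemma independent_doubled_even_basis: "bvs.independent (doubled_even_basis n)"
  unfolding doubled_even_basis_def
proof (rule bvs_independent_pivots)
  fix v assume "v \<in> (\<lambda>i. pair_indicator {0, i}) ` {1..<n}"
  then obtain i where "i \<in> {1..<n}" "v = pair_indicator {0, i}" by blast
  then show "\<exists>p. v p = 1 \<and> (\<forall>w\<in>(\<lambda>i. pair_indicator {0, i}) ` {1..<n}. w \<noteq> v \<longrightarrow> w p = 0)"
    by (intro exI[of _ "2*i"]) (auto simp: pair_indicator_pivot)
qed simp

lemma card_doubled_even_basis: "card (doubled_even_basis n) = n - 1"
proof -
  have "inj_on (\<lambda>i. pair_indicator {0, i}) {1..<n}"
    by (rule inj_onI) (metis pair_indicator_pivot zero_neq_one)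
  then show ?thesis by (simp add: doubled_even_basis_def card_image)
qed

lemma doubled_even_code_subset_span:
  assumes "n \<ge> 1"
  shows "doubled_even_code n \<subseteq> bvs.span (doubled_even_basis n)"
proof
  fix v assume v: "v \<in> doubled_even_code n"
  have v_words: "v (2*m) = 0" if "m \<ge> n" for m
    using v that by (simp add: doubled_even_code_def pair_code_def words_def)
  have "(\<Sum>k<n. v (2*k)) = 0"
    using v by (simp add: doubled_even_code_def pair_code_def)
  moreover have "{..<n} = insert 0 {1..<n}" using assms by auto
  ultimately have v0: "v 0 = (\<Sum>i\<in>{1..<n}. v (2*i))"
    by (simp add: bit_add_eq_0_iff)
  have "v = (\<Sum>i\<in>{1..<n}. bscale (v (2*i)) (pair_indicator {0, i}))"
  proof
    fix j :: nat
    let ?m = "j div 2"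
    have "(\<Sum>i\<in>{1..<n}. bscale (v (2*i)) (pair_indicator {0, i})) j
        = (\<Sum>i\<in>{1..<n}. if ?m = 0 \<or> ?m = i then v (2*i) else 0)"
      by (auto simp: sum_fun_apply pair_indicator_def intro!: sum.cong)
    also have "\<dots> = v (2 * ?m)"
    proof (cases "?m = 0")
      case True
      then show ?thesis using v0 by simp
    next
      case False
      then show ?thesis using v_words by (simp add: sum.delta')
    qed
    finally show "v j = (\<Sum>i\<in>{1..<n}. bscale (v (2*i)) (pair_indicator {0, i})) j"
      using doubled_even_code_coordinate[OF v] by simp
  qed
  then show "v \<in> bvs.span (doubled_even_basis n)"
    unfolding doubled_even_basis_def
    by (metis (no_types, lifting) bvs.span_base bvs.span_scale bvs.span_sum imageI)
qed

lemma dim_doubled_even_code: "n \<ge> 1 \<Longrightarrow> bvs.dim (doubled_even_code n) = n - 1"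
  using bvs.dim_unique[OF doubled_even_basis_subset doubled_even_code_subset_span
      independent_doubled_even_basis card_doubled_even_basis] .

lemma pair_code_subset_span:
  assumes "n \<ge> 1"
  shows "pair_code n \<subseteq> bvs.span (insert (odd_indicator n) (doubled_even_basis n))"
proof
  fix v assume v: "v \<in> pair_code n"
  let ?w = "v - bscale (v 0 + v 1) (odd_indicator n)"
  have "?w \<in> pair_code n"
    using v odd_indicator_in_pair_code[OF assms] subspace_pair_code
    by (metis bvs.subspace_diff bvs.subspace_scale)
  moreover have "?w 0 + ?w 1 = 0"
    using assms by (simp add: odd_indicator_def)
  ultimately have "?w \<in> bvs.span (doubled_even_basis n)"
    using doubled_even_code_subset_span[OF assms] by (auto simp: doubled_even_code_def)
  then show "v \<in> bvs.span (insert (odd_indicator n) (doubled_even_basis n))"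
    unfolding bvs.span_insert by blast
qed

lemma dim_pair_code:
  assumes "n \<ge> 1"
  shows "bvs.dim (pair_code n) = n"
proof (rule bvs.dim_unique[OF _ pair_code_subset_span[OF assms]])
  show "insert (odd_indicator n) (doubled_even_basis n) \<subseteq> pair_code n"
    using odd_indicator_in_pair_code[OF assms] doubled_even_basis_subset
    by (auto simp: doubled_even_code_def)
  have "bvs.span (doubled_even_basis n) \<subseteq> doubled_even_code n"
    using bvs.span_minimal[OF doubled_even_basis_subset subspace_doubled_even_code] .
  then have notin_span: "odd_indicator n \<notin> bvs.span (doubled_even_basis n)"
    using odd_indicator_notin_doubled_even_code[OF assms] by blast
  then show "bvs.independent (insert (odd_indicator n) (doubled_even_basis n))"
    using independent_doubled_even_basis by (rule bvs.independent_insertI)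
  from notin_span have "odd_indicator n \<notin> doubled_even_basis n"
    using bvs.span_base by blast
  then show "card (insert (odd_indicator n) (doubled_even_basis n)) = n"
    using card_doubled_even_basis assms by (simp add: doubled_even_basis_def)
qed

lemma hullE_pair_code:
  assumes "odd n"
  shows "hullE (2*n) (pair_code n) = doubled_even_code n"
proof -
  have "x \<in> hullE (2*n) (pair_code n) \<longleftrightarrow> x \<in> doubled_even_code n" for x
  proof
    assume "x \<in> hullE (2*n) (pair_code n)"
    then have "x \<in> pair_code n" "einner (2*n) x x = 0"
      by (auto simp: hullE_def edual_def)
    then show "x \<in> doubled_even_code n"
      using assms by (auto simp: einner_pair_code doubled_even_code_def of_nat_bit)
  next
    assume x: "x \<in> doubled_even_code n"
    then have "einner (2*n) y x = 0" if "y \<in> pair_code n" for y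
      using that by (simp add: einner_pair_code doubled_even_code_def)
    then show "x \<in> hullE (2*n) (pair_code n)"
      using x by (auto simp: hullE_def edual_def doubled_even_code_def pair_code_def)
  qed
  then show ?thesis by blast
qed

lemma euclid_self_dual_pair_code:
  assumes "even n" and "n \<ge> 2"
  shows "euclid_self_dual (2*n) (pair_code n)"
  unfolding euclid_self_dual_def
proof
  show "pair_code n \<subseteq> edual (2*n) (pair_code n)"
    using assms by (auto simp: edual_def pair_code_def einner_pair_code of_nat_bit)
next
  show "edual (2*n) (pair_code n) \<subseteq> pair_code n"
  proof
    fix y assume "y \<in> edual (2*n) (pair_code n)"
    then have y_words: "y \<in> words (2*n)"
      and orth: "\<And>x. x \<in> pair_code n \<Longrightarrow> einner (2*n) x y = 0"
      by (auto simp: edual_def)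
    have pair: "y (2*k) + y (2*k+1) = y 0 + y 1" if "k < n" for k
    proof (cases "k = 0")
      case False
      have "pair_indicator {0, k} \<in> pair_code n"
        using that False pair_indicator_in_doubled_even_code[of "{0, k}" n]
        by (auto simp: doubled_even_code_def)
      then have "einner (2*n) (pair_indicator {0, k}) y = 0" by (rule orth)
      then show ?thesis
        using that False by (simp add: einner_pair_indicator bit_add_eq_0_iff)
    qed simp
    have "0 = einner (2*n) (odd_indicator n) y"
      using orth odd_indicator_in_pair_code assms(2) by simp
    also have "\<dots> = (\<Sum>k<n. y (2*k) + (y 0 + y 1))"
      unfolding einner_odd_indicator using pair
      by (intro sum.cong) (simp_all flip: bit_add_left_eq_iff)
    also have "\<dots> = (\<Sum>k<n. y (2*k))"
      using assms(1) by (simp add: sum.distrib of_nat_bit)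
    finally show "y \<in> pair_code n"
      using y_words pair by (simp add: pair_code_def)
  qed
qed

lemma wt_pair_indicator:
  assumes "finite K"
  shows "wt (pair_indicator K) = 2 * card K"
proof -
  have "{j. pair_indicator K j \<noteq> 0} = (\<lambda>k. 2*k) ` K \<union> (\<lambda>k. 2*k+1) ` K"
  proof (intro equalityI subsetI)
    fix j assume "j \<in> {j. pair_indicator K j \<noteq> 0}"
    then have "j div 2 \<in> K" by (simp add: pair_indicator_def split: if_splits)
    moreover have "j = 2 * (j div 2) \<or> j = 2 * (j div 2) + 1" by linarith
    ultimately show "j \<in> (\<lambda>k. 2*k) ` K \<union> (\<lambda>k. 2*k+1) ` K" by blast
  qed (auto simp: pair_indicator_def)
  moreover have "(\<lambda>k. 2*k) ` K \<inter> (\<lambda>k. 2*k+1) ` K = {}" by auto presburger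
  ultimately show ?thesis
    using assms by (simp add: wt_def card_Un_disjoint card_image inj_on_def)
qed

lemma wt_odd_indicator: "wt (odd_indicator n) = n"
proof -
  have "{j. odd_indicator n j \<noteq> 0} = (\<lambda>k. 2*k+1) ` {..<n}"
    by (auto simp: odd_indicator_def image_iff elim!: oddE)
  then show ?thesis by (simp add: wt_def card_image inj_on_def)
qed

lemma length_le_wt_pair_code:
  assumes c: "c \<in> pair_code n" and "c 0 + c 1 = 1"
  shows "n \<le> wt c"
proof -
  define f where "f k = (if c (2*k) = 1 then 2*k else 2*k+1)" for k
  have "inj_on f {..<n}"
    by (rule inj_onI) (auto simp: f_def split: if_splits)
  moreover have "f ` {..<n} \<subseteq> {i. c i \<noteq> 0}"
  proof
    fix i assume "i \<in> f ` {..<n}"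
    then obtain k where "k < n" and i: "i = f k" by blast
    then have "c (2*k+1) = c (2*k) + 1"
      using pair_code_odd_coordinate[OF c] assms(2) by simp
    then show "i \<in> {i. c i \<noteq> 0}"
      unfolding i f_def by (cases "c (2*k)") simp_all
  qed
  moreover have "c \<in> words (2*n)"
    using c by (simp add: pair_code_def)
  ultimately show ?thesis
    using card_le_wt[of c "2*n" "f ` {..<n}"] by (simp add: card_image)
qed

lemma four_le_wt_doubled_even_code:
  assumes c: "c \<in> doubled_even_code n" and "c \<noteq> 0"
  shows "4 \<le> wt c"
proof -
  define K where "K = {k. k < n \<and> c (2*k) = 1}"
  have c_eq: "c = pair_indicator K"
    unfolding K_def by (rule doubled_even_code_eq_pair_indicator[OF c])
  have "finite K" by (simp add: K_def)
  moreover have "K \<noteq> {}"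
    using \<open>c \<noteq> 0\<close> by (auto simp: c_eq pair_indicator_def fun_eq_iff)
  ultimately have "card K \<noteq> 0" by simp
  moreover have "even (card K)"
    using even_card_doubled_even_code[OF c] by (simp add: K_def)
  ultimately have "card K \<ge> 2" by presburger
  then show ?thesis
    using \<open>finite K\<close> by (simp add: c_eq wt_pair_indicator)
qed

lemma min_dist_pair_code:
  assumes "n \<ge> 2"
  shows "min_dist (pair_code n) = min 4 n"
  unfolding min_dist_def
proof (rule Min_eqI)
  have "{wt c |c. c \<in> pair_code n \<and> c \<noteq> 0} \<subseteq> {..2*n}"
    using wt_le_length by (auto simp: pair_code_def)
  then show "finite {wt c |c. c \<in> pair_code n \<and> c \<noteq> 0}"
    using finite_subset by blast
next
  fix w assume "w \<in> {wt c |c. c \<in> pair_code n \<and> c \<noteq> 0}"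
  then obtain c where c: "c \<in> pair_code n" "c \<noteq> 0" and w: "w = wt c" by blast
  show "min 4 n \<le> w"
  proof (cases "c 0 + c 1 = 0")
    case True
    then show ?thesis
      using four_le_wt_doubled_even_code c w by (fastforce simp: doubled_even_code_def)
  next
    case False
    then show ?thesis
      using length_le_wt_pair_code c w by fastforce
  qed
next
  show "min 4 n \<in> {wt c |c. c \<in> pair_code n \<and> c \<noteq> 0}"
  proof (cases "n \<le> 4")
    case True
    then show ?thesis
      using assms odd_indicator_in_pair_code odd_indicator_nonzero wt_odd_indicator
      by (intro CollectI exI[of _ "odd_indicator n"]) auto
  next
    case False
    have "pair_indicator {0, n - 1} \<in> pair_code n"
      using pair_indicator_in_doubled_even_code[of "{0, n - 1}" n] assms
      by (auto simp: doubled_even_code_def)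
    moreover have "wt (pair_indicator {0, n - 1}) = 4"
      using assms by (simp add: wt_pair_indicator)
    ultimately show ?thesis
      using False by (intro CollectI exI[of _ "pair_indicator {0, n - 1}"]) auto
  qed
qed

lemma linear_code_pair_code:
  assumes "n \<ge> 2"
  shows "linear_code (2*n) n (min 4 n) (pair_code n)"
  unfolding linear_code_def
proof (intro conjI)
  show "pair_code n \<subseteq> words (2*n)"
    by (auto simp: pair_code_def)
  show "\<exists>c\<in>pair_code n. c \<noteq> 0"
    using assms odd_indicator_in_pair_code odd_indicator_nonzero
    by (intro bexI[of _ "odd_indicator n"]) auto
qed (use assms subspace_pair_code dim_pair_code min_dist_pair_code in auto)

lemma almost_euclid_self_dual_pair_code:
  assumes "odd n"
  shows "almost_euclid_self_dual (2*n) (pair_code n)"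
proof -
  have "n \<ge> 1" using assms odd_pos by fastforce
  then show ?thesis
    using assms by (simp add: almost_euclid_self_dual_def almost_euclid_self_orth_def
        hullE_pair_code dim_doubled_even_code dim_pair_code)
qed

theorem theorem11:
  shows "(\<forall>n::nat. odd n \<and> n \<ge> 3 \<longrightarrow>
            (\<exists>C. linear_code (2*n) n (min 4 n) C \<and> almost_euclid_self_dual (2*n) C))
       \<and> (\<forall>n::nat. odd n \<and> n \<ge> 5 \<longrightarrow>
            (\<exists>C. linear_code (2*n) n 4 C \<and> almost_euclid_self_dual (2*n) C))
       \<and> (\<forall>n::nat. even n \<and> n \<ge> 2 \<longrightarrow>
            (\<exists>C. linear_code (2*n) n (min 4 n) C \<and> euclid_self_dual (2*n) C))
       \<and> (\<forall>n::nat. even n \<and> n \<ge> 4 \<longrightarrow>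
            (\<exists>C. linear_code (2*n) n 4 C \<and> euclid_self_dual (2*n) C))"
proof (intro conjI allI impI; elim conjE)
  fix n :: nat
  assume "odd n" and "n \<ge> 3"
  then show "\<exists>C. linear_code (2*n) n (min 4 n) C \<and> almost_euclid_self_dual (2*n) C"
    using linear_code_pair_code almost_euclid_self_dual_pair_code
    by (intro exI[of _ "pair_code n"]) simp
next
  fix n :: nat
  assume "odd n" and "n \<ge> 5"
  then show "\<exists>C. linear_code (2*n) n 4 C \<and> almost_euclid_self_dual (2*n) C"
    using linear_code_pair_code[of n] almost_euclid_self_dual_pair_code
    by (intro exI[of _ "pair_code n"]) simp
next
  fix n :: nat
  assume "even n" and "n \<ge> 2"
  then show "\<exists>C. linear_code (2*n) n (min 4 n) C \<and> euclid_self_dual (2*n) C"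
    using linear_code_pair_code euclid_self_dual_pair_code
    by (intro exI[of _ "pair_code n"]) simp
next
  fix n :: nat
  assume "even n" and "n \<ge> 4"
  then show "\<exists>C. linear_code (2*n) n 4 C \<and> euclid_self_dual (2*n) C"
    using linear_code_pair_code[of n] euclid_self_dual_pair_code
    by (intro exI[of _ "pair_code n"]) simp
qed

end
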